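(* Let $A\in\mathbb{R}^{m\times N}$ and $K\subseteq[N]=\{1,\dots,N\}$. Then the following are equivalent: (i) every vector $x_0\in\mathbb{R}^N_+$ with $\operatorname{supp}x_0\subseteq K$ is the unique solution of $(P_+)$ with $b=Ax_0$; (ii) $\mathbb{1}_K$ is the unique solution of $(P_+)$ with $b=A\mathbb{1}_K$.
   Context: For $b\in\mathbb{R}^m$, $(P_+)$ denotes the convex program $\min \|x\|_1$ subject to $Ax=b$ and $x\in\mathbb{R}_+^N$ (all entries nonnegative). "Unique solution" means unique minimizer. $\mathbb{1}_K\in\mathbb{R}^N$ denotes the vector with entries $1$ on $K$ and $0$ on $[N]\setminus K$. *)

theory Defs
  imports "HOL-Analysis.Analysis"
begin

definition l1norm :: "real^'n \<Rightarrow> real" where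
  "l1norm x = (\<Sum>i\<in>UNIV. \<bar>x $ i\<bar>)"

definition feasible_Pplus :: "real^'n^'m \<Rightarrow> real^'m \<Rightarrow> real^'n \<Rightarrow> bool" where
  "feasible_Pplus A b x \<longleftrightarrow> A *v x = b \<and> (\<forall>i. 0 \<le> x $ i)"

definition unique_sol_Pplus :: "real^'n^'m \<Rightarrow> real^'m \<Rightarrow> real^'n \<Rightarrow> bool" where
  "unique_sol_Pplus A b x \<longleftrightarrow> feasible_Pplus A b x \<and>
     (\<forall>z. feasible_Pplus A b z \<and> z \<noteq> x \<longrightarrow> l1norm x < l1norm z)"

definition supp :: "real^'n \<Rightarrow> 'n set" where
  "supp x = {i. x $ i \<noteq> 0}"

definition indic_vec :: "'n set \<Rightarrow> real^'n" where
  "indic_vec K = (\<chi> i. if i \<in> K then 1 else 0)"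

end

theory Submission
  imports Defs
begin

text \<open>On the nonnegative orthant the l1 norm is linear, so a feasible point x is the unique
  minimiser iff every nonzero kernel direction v keeping x + v nonnegative strictly increases
  the coordinate sum. At \<open>\<one>\<^sub>K\<close> every kernel direction that is nonnegative off K keeps
  \<open>\<one>\<^sub>K + t v\<close> nonnegative for small t > 0, so uniqueness at \<open>\<one>\<^sub>K\<close> gives all such directions a
  positive sum; these directions contain the feasible ones at any nonnegative x0 supported in K.\<close>

lemma l1norm_nonneg_eq_sum: "(\<forall>i. 0 \<le> x $ i) \<Longrightarrow> l1norm x = (\<Sum>i\<in>UNIV. x $ i)"
  unfolding l1norm_def by simp

lemma unique_sol_Pplus_iff_kernel:
  fixes A :: "real^'n^'m"
  assumes x_nonneg: "\<forall>i. 0 \<le> x $ i"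
  shows "unique_sol_Pplus A (A *v x) x \<longleftrightarrow>
    (\<forall>v. A *v v = 0 \<and> v \<noteq> 0 \<and> (\<forall>i. 0 \<le> x $ i + v $ i) \<longrightarrow> 0 < (\<Sum>i\<in>UNIV. v $ i))"
proof -
  have feasible_iff: "feasible_Pplus A (A *v x) (x + v) \<longleftrightarrow>
      A *v v = 0 \<and> (\<forall>i. 0 \<le> x $ i + v $ i)" for v
    by (auto simp: feasible_Pplus_def matrix_vector_right_distrib)
  have l1norm_less_iff: "l1norm x < l1norm (x + v) \<longleftrightarrow> 0 < (\<Sum>i\<in>UNIV. v $ i)"
    if "\<forall>i. 0 \<le> x $ i + v $ i" for v
    using that x_nonneg by (simp add: l1norm_nonneg_eq_sum sum.distrib)
  have "(\<forall>z. feasible_Pplus A (A *v x) z \<and> z \<noteq> x \<longrightarrow> l1norm x < l1norm z) \<longleftrightarrow>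
      (\<forall>v. feasible_Pplus A (A *v x) (x + v) \<and> v \<noteq> 0 \<longrightarrow> l1norm x < l1norm (x + v))"
    by (metis add.right_neutral add_diff_cancel_left' diff_add_cancel)
  also have "\<dots> \<longleftrightarrow>
      (\<forall>v. A *v v = 0 \<and> v \<noteq> 0 \<and> (\<forall>i. 0 \<le> x $ i + v $ i) \<longrightarrow> 0 < (\<Sum>i\<in>UNIV. v $ i))"
    using feasible_iff l1norm_less_iff by blast
  finally show ?thesis
    using x_nonneg by (simp add: unique_sol_Pplus_def feasible_Pplus_def)
qed

lemma indic_vec_plus_small_nonneg:
  fixes v :: "real^'n"
  assumes "\<forall>i. i \<notin> K \<longrightarrow> 0 \<le> v $ i"
  obtains t where "0 < t" and "\<forall>i. 0 \<le> indic_vec K $ i + t * v $ i"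
proof
  define S where "S = (\<Sum>i\<in>UNIV. \<bar>v $ i\<bar>)"
  have "0 \<le> S" unfolding S_def by (simp add: sum_nonneg)
  then show t_pos: "0 < 1 / (1 + S)" by simp
  show "\<forall>i. 0 \<le> indic_vec K $ i + 1 / (1 + S) * v $ i"
  proof
    fix i
    have "\<bar>v $ i\<bar> \<le> S" unfolding S_def by (rule member_le_sum) auto
    then have "1 / (1 + S) * \<bar>v $ i\<bar> \<le> 1"
      using \<open>0 \<le> S\<close> by (simp add: field_simps)
    then have "- 1 \<le> 1 / (1 + S) * v $ i"
      using t_pos by (simp add: abs_mult abs_le_iff field_simps)
    moreover have "0 \<le> 1 / (1 + S) * v $ i" if "i \<notin> K"
      using assms t_pos that by simp
    ultimately show "0 \<le> indic_vec K $ i + 1 / (1 + S) * v $ i"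
      by (auto simp: indic_vec_def)
  qed
qed

lemma kernel_sum_pos_of_unique_indic_vec:
  fixes A :: "real^'n^'m"
  assumes unique: "unique_sol_Pplus A (A *v indic_vec K) (indic_vec K)"
    and "A *v v = 0" and "v \<noteq> 0" and "\<forall>i. i \<notin> K \<longrightarrow> 0 \<le> v $ i"
  shows "0 < (\<Sum>i\<in>UNIV. v $ i)"
proof -
  obtain t where t: "0 < t" "\<forall>i. 0 \<le> indic_vec K $ i + t * v $ i"
    using indic_vec_plus_small_nonneg assms(4) by blast
  have "A *v (t *\<^sub>R v) = 0" "t *\<^sub>R v \<noteq> 0"
    using assms(2,3) t(1) by (simp_all add: matrix_vector_mult_scaleR)
  moreover have "\<forall>i. 0 \<le> indic_vec K $ i"
    by (simp add: indic_vec_def)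
  ultimately have "0 < (\<Sum>i\<in>UNIV. (t *\<^sub>R v) $ i)"
    using unique t(2) unique_sol_Pplus_iff_kernel by fastforce
  then show ?thesis
    using t(1) by (simp add: sum_distrib_left[symmetric] zero_less_mult_iff)
qed

theorem proposition1p1:
  fixes A :: "real^'n^'m" and K :: "'n set"
  shows "(\<forall>x0::real^'n. (\<forall>i. 0 \<le> x0 $ i) \<and> supp x0 \<subseteq> K \<longrightarrow>
            unique_sol_Pplus A (A *v x0) x0)
         \<longleftrightarrow> unique_sol_Pplus A (A *v indic_vec K) (indic_vec K)"
proof
  assume "\<forall>x0::real^'n. (\<forall>i. 0 \<le> x0 $ i) \<and> supp x0 \<subseteq> K \<longrightarrow>
            unique_sol_Pplus A (A *v x0) x0"
  then show "unique_sol_Pplus A (A *v indic_vec K) (indic_vec K)"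
    by (auto simp: indic_vec_def supp_def)
next
  assume unique: "unique_sol_Pplus A (A *v indic_vec K) (indic_vec K)"
  show "\<forall>x0::real^'n. (\<forall>i. 0 \<le> x0 $ i) \<and> supp x0 \<subseteq> K \<longrightarrow>
            unique_sol_Pplus A (A *v x0) x0"
  proof (intro allI impI)
    fix x0 :: "real^'n"
    assume "(\<forall>i. 0 \<le> x0 $ i) \<and> supp x0 \<subseteq> K"
    then have x0_nonneg: "\<forall>i. 0 \<le> x0 $ i" and x0_off_K: "\<And>i. i \<notin> K \<Longrightarrow> x0 $ i = 0"
      by (auto simp: supp_def)
    show "unique_sol_Pplus A (A *v x0) x0"
      unfolding unique_sol_Pplus_iff_kernel[OF x0_nonneg]
    proof (intro allI impI)
      fix v :: "real^'n"
      assume v: "A *v v = 0 \<and> v \<noteq> 0 \<and> (\<forall>i. 0 \<le> x0 $ i + v $ i)"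
      then have "\<forall>i. i \<notin> K \<longrightarrow> 0 \<le> v $ i"
        by (metis add_0 x0_off_K)
      then show "0 < (\<Sum>i\<in>UNIV. v $ i)"
        using v kernel_sum_pos_of_unique_indic_vec[OF unique] by blast
    qed
  qed
qed

end
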